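(* If $\mathcal M$ is a uniform oriented matroid with $\operatorname{rank}(\mathcal M)\ge 4$ and $\operatorname{corank}(\mathcal M)\ge 2$, then $\mathcal M$ has a minor isomorphic to the alternating oriented matroid $C^{6,4}$.
   Context: An oriented matroid of rank $d$ on $E$ (given by signed circuits) is uniform if the supports of its circuits are exactly all $(d+1)$-element subsets of $E$; corank is $|E|-\operatorname{rank}$. Minors are obtained by sequences of deletions and contractions of elements. $C^{n,d}$ on $[n]$ has as circuits the signed sets $(I^{odd},I^{even})$ and $(I^{even},I^{odd})$ for $(d+1)$-subsets $I=\{i_1<\dots<i_{d+1}\}$, with $I^{odd}=\{i_1,i_3,\dots\}$, $I^{even}=\{i_2,i_4,\dots\}$. Isomorphism: reorientation of a subset of elements followed by bijective relabeling. *)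

theory Defs
  imports Main
begin

text \<open>Signed sets are pairs (positive part, negative part).\<close>
type_synonym 'a signed = "'a set \<times> 'a set"

definition supp :: "'a signed \<Rightarrow> 'a set" where
  "supp X = fst X \<union> snd X"

definition neg :: "'a signed \<Rightarrow> 'a signed" where
  "neg X = (snd X, fst X)"

definition oriented_matroid :: "'a set \<Rightarrow> 'a signed set \<Rightarrow> bool" where
  "oriented_matroid E C \<longleftrightarrow>
     finite E \<and>
     (\<forall>X\<in>C. fst X \<inter> snd X = {} \<and> supp X \<subseteq> E) \<and>
     ({}, {}) \<notin> C \<and>
     (\<forall>X\<in>C. neg X \<in> C) \<and>
     (\<forall>X\<in>C. \<forall>Y\<in>C. supp X \<subseteq> supp Y \<longrightarrow> X = Y \<or> X = neg Y) \<and>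
     (\<forall>X\<in>C. \<forall>Y\<in>C. \<forall>e. X \<noteq> neg Y \<and> e \<in> fst X \<inter> snd Y \<longrightarrow>
        (\<exists>Z\<in>C. fst Z \<subseteq> (fst X \<union> fst Y) - {e} \<and> snd Z \<subseteq> (snd X \<union> snd Y) - {e}))"

definition uniform_OM :: "'a set \<Rightarrow> 'a signed set \<Rightarrow> nat \<Rightarrow> bool" where
  "uniform_OM E C d \<longleftrightarrow> oriented_matroid E C \<and> d \<le> card E \<and>
     supp ` C = {I. I \<subseteq> E \<and> card I = d + 1}"

definition deletion :: "'a set \<times> 'a signed set \<Rightarrow> 'a \<Rightarrow> 'a set \<times> 'a signed set" where
  "deletion M e = (fst M - {e}, {X \<in> snd M. e \<notin> supp X})"

definition contraction :: "'a set \<times> 'a signed set \<Rightarrow> 'a \<Rightarrow> 'a set \<times> 'a signed set" where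
  "contraction M e =
     (let D = (\<lambda>X. (fst X - {e}, snd X - {e})) ` snd M - {({}, {})}
      in (fst M - {e}, {X \<in> D. \<forall>Y\<in>D. supp Y \<subseteq> supp X \<longrightarrow> supp Y = supp X}))"

inductive minor :: "'a set \<times> 'a signed set \<Rightarrow> 'a set \<times> 'a signed set \<Rightarrow> bool" where
  minor_refl: "minor M M"
| minor_del: "minor N M \<Longrightarrow> e \<in> fst N \<Longrightarrow> minor (deletion N e) M"
| minor_con: "minor N M \<Longrightarrow> e \<in> fst N \<Longrightarrow> minor (contraction N e) M"

definition reorient :: "'a set \<Rightarrow> 'a signed \<Rightarrow> 'a signed" where
  "reorient A X = ((fst X - A) \<union> (snd X \<inter> A), (snd X - A) \<union> (fst X \<inter> A))"

definition relabel :: "('a \<Rightarrow> 'b) \<Rightarrow> 'a signed \<Rightarrow> 'b signed" where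
  "relabel f X = (f ` fst X, f ` snd X)"

definition om_iso :: "'a set \<times> 'a signed set \<Rightarrow> 'b set \<times> 'b signed set \<Rightarrow> bool" where
  "om_iso M M' \<longleftrightarrow> (\<exists>A f. A \<subseteq> fst M \<and> bij_betw f (fst M) (fst M') \<and>
      snd M' = (\<lambda>X. relabel f (reorient A X)) ` snd M)"

text \<open>Elements of I in odd / even position (1-indexed) in increasing order.\<close>
definition odd_part :: "nat set \<Rightarrow> nat set" where
  "odd_part I = {i \<in> I. even (card {j \<in> I. j < i})}"

definition even_part :: "nat set \<Rightarrow> nat set" where
  "even_part I = {i \<in> I. odd (card {j \<in> I. j < i})}"

definition alt_circuits :: "nat \<Rightarrow> nat \<Rightarrow> nat signed set" where
  "alt_circuits n d =
     (\<Union>I\<in>{I. I \<subseteq> {1..n} \<and> card I = d + 1}.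
        {(odd_part I, even_part I), (even_part I, odd_part I)})"

definition alternating_OM :: "nat \<Rightarrow> nat \<Rightarrow> nat set \<times> nat signed set" where
  "alternating_OM n d = ({1..n}, alt_circuits n d)"

end

theory Submission
  imports Defs
begin

text \<open>Deleting elements of a uniform oriented matroid keeps it uniform of the same rank, so we may
  pass to corank two. In corank two an eliminated circuit avoiding f must have support E - {f}; hence
  contracting an element keeps the circuit axioms and lowers the rank by one, and we reach rank 4 on
  six elements. A uniform oriented matroid of rank n on n + 2 elements has, up to sign, exactly one
  circuit X_k with support V - {k} for each element k. Circuit elimination between X_k and X_l
  produces a multiple of X_f, and the resulting sign relations show that, after rescaling the X_k and
  reorienting, the sign X_k(j) is +1 precisely when k precedes j in a linear order of V. Numbering V
  along this order and reorienting by parity turns the X_k into the circuits of C^{n+2,n}.\<close>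

section \<open>Uniform oriented matroids, deletion and contraction\<close>

lemma supp_neg [simp]: "supp (neg X) = supp X"
  unfolding supp_def neg_def by auto

lemma neg_neg [simp]: "neg (neg X) = X"
  unfolding neg_def by simp

lemma supp_empty [simp]: "supp ({}, {}) = {}"
  unfolding supp_def by simp

definition erase :: "'a \<Rightarrow> 'a signed \<Rightarrow> 'a signed" where
  "erase e X = (fst X - {e}, snd X - {e})"

lemma fst_erase [simp]: "fst (erase e X) = fst X - {e}"
  and snd_erase [simp]: "snd (erase e X) = snd X - {e}"
  and supp_erase [simp]: "supp (erase e X) = supp X - {e}"
  unfolding erase_def supp_def by auto

lemma erase_neg: "erase e (neg X) = neg (erase e X)"
  unfolding erase_def neg_def by simp

lemma oriented_matroidI:
  assumes "finite E"
    and "\<And>X. X \<in> C \<Longrightarrow> fst X \<inter> snd X = {}" "\<And>X. X \<in> C \<Longrightarrow> supp X \<subseteq> E"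
    and "({}, {}) \<notin> C" "\<And>X. X \<in> C \<Longrightarrow> neg X \<in> C"
    and "\<And>X Y. X \<in> C \<Longrightarrow> Y \<in> C \<Longrightarrow> supp X \<subseteq> supp Y \<Longrightarrow> X = Y \<or> X = neg Y"
    and "\<And>X Y e. X \<in> C \<Longrightarrow> Y \<in> C \<Longrightarrow> X \<noteq> neg Y \<Longrightarrow> e \<in> fst X \<inter> snd Y \<Longrightarrow>
      \<exists>Z\<in>C. fst Z \<subseteq> fst X \<union> fst Y - {e} \<and> snd Z \<subseteq> snd X \<union> snd Y - {e}"
  shows "oriented_matroid E C"
  unfolding oriented_matroid_def using assms by simp

lemma oriented_matroid_finite: "oriented_matroid E C \<Longrightarrow> finite E"
  unfolding oriented_matroid_def by simp

lemma oriented_matroid_disjoint: "oriented_matroid E C \<Longrightarrow> X \<in> C \<Longrightarrow> fst X \<inter> snd X = {}"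
  unfolding oriented_matroid_def by simp

lemma oriented_matroid_neg: "oriented_matroid E C \<Longrightarrow> X \<in> C \<Longrightarrow> neg X \<in> C"
  unfolding oriented_matroid_def by simp

lemma oriented_matroid_supp_subset:
  "oriented_matroid E C \<Longrightarrow> X \<in> C \<Longrightarrow> Y \<in> C \<Longrightarrow> supp X \<subseteq> supp Y \<Longrightarrow> X = Y \<or> X = neg Y"
  unfolding oriented_matroid_def by simp

lemma oriented_matroid_elimination:
  assumes "oriented_matroid E C" "X \<in> C" "Y \<in> C" "X \<noteq> neg Y" "e \<in> fst X \<inter> snd Y"
  obtains Z where "Z \<in> C" "fst Z \<subseteq> fst X \<union> fst Y - {e}" "snd Z \<subseteq> snd X \<union> snd Y - {e}"
proof -
  have "\<forall>X\<in>C. \<forall>Y\<in>C. \<forall>e. X \<noteq> neg Y \<and> e \<in> fst X \<inter> snd Y \<longrightarrow>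
      (\<exists>Z\<in>C. fst Z \<subseteq> fst X \<union> fst Y - {e} \<and> snd Z \<subseteq> snd X \<union> snd Y - {e})"
    using assms(1) unfolding oriented_matroid_def by (elim conjE)
  then show ?thesis using assms(2-5) that by meson
qed

lemma uniform_OM_supp:
  assumes "uniform_OM E C d" "X \<in> C"
  shows "supp X \<subseteq> E" "card (supp X) = d + 1"
proof -
  have "supp X \<in> supp ` C" using assms(2) by (rule imageI)
  then show "supp X \<subseteq> E" "card (supp X) = d + 1" using assms(1) unfolding uniform_OM_def by simp_all
qed

lemma uniform_OM_obtain_circuit:
  assumes "uniform_OM E C d" "S \<subseteq> E" "card S = d + 1"
  obtains X where "X \<in> C" "supp X = S"
proof -
  have "S \<in> supp ` C" using assms unfolding uniform_OM_def by simp
  then show thesis using that by (metis imageE)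
qed

lemma uniform_OM_finite: "uniform_OM E C d \<Longrightarrow> finite E"
  unfolding uniform_OM_def by (meson oriented_matroid_finite)

lemma uniform_OM_finite_supp: "uniform_OM E C d \<Longrightarrow> X \<in> C \<Longrightarrow> finite (supp X)"
  by (meson finite_subset uniform_OM_finite uniform_OM_supp(1))

lemma uniform_OM_corank_two_supp:
  assumes U: "uniform_OM E C d" and "card E = d + 2" "X \<in> C" "e \<in> E" "e \<notin> supp X"
  shows "supp X = E - {e}"
proof -
  have "supp X \<subseteq> E - {e}" using uniform_OM_supp[OF U assms(3)] assms(5) by blast
  moreover have "card (E - {e}) = card (supp X)" using uniform_OM_supp[OF U assms(3)] assms(2,4) by simp
  ultimately show ?thesis using uniform_OM_finite[OF U] by (metis card_subset_eq finite_Diff)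
qed

lemma deletion_oriented_matroid:
  assumes OM: "oriented_matroid E C"
  shows "oriented_matroid (E - {e}) {X \<in> C. e \<notin> supp X}"
proof -
  have "\<exists>Z\<in>{X \<in> C. e \<notin> supp X}. fst Z \<subseteq> fst X \<union> fst Y - {f} \<and> snd Z \<subseteq> snd X \<union> snd Y - {f}"
    if h: "X \<in> C" "Y \<in> C" "e \<notin> supp X" "e \<notin> supp Y" "X \<noteq> neg Y" "f \<in> fst X \<inter> snd Y"
    for X Y f
  proof -
    obtain Z where "Z \<in> C" "fst Z \<subseteq> fst X \<union> fst Y - {f}" "snd Z \<subseteq> snd X \<union> snd Y - {f}"
      using oriented_matroid_elimination[OF OM h(1,2,5,6)] .
    moreover have "e \<notin> supp Z" using calculation h(3,4) unfolding supp_def by blast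
    ultimately show ?thesis by blast
  qed
  then show ?thesis using OM unfolding oriented_matroid_def by auto
qed

lemma deletion_uniform_OM:
  assumes U: "uniform_OM E C d" and "e \<in> E" "d < card E"
  shows "uniform_OM (E - {e}) {X \<in> C. e \<notin> supp X} d"
proof -
  have "supp ` {X \<in> C. e \<notin> supp X} = {I. I \<subseteq> E - {e} \<and> card I = d + 1}"
  proof (intro equalityI subsetI)
    fix I assume I: "I \<in> {I. I \<subseteq> E - {e} \<and> card I = d + 1}"
    then obtain X where "X \<in> C" "supp X = I"
      by (auto intro: uniform_OM_obtain_circuit[OF U])
    then show "I \<in> supp ` {X \<in> C. e \<notin> supp X}" using I by auto
  qed (auto dest: uniform_OM_supp[OF U])
  then show ?thesis
    using assms unfolding uniform_OM_def by (auto intro: deletion_oriented_matroid)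
qed

text \<open>Exchanging an element of X for e: a circuit avoiding e does not survive contraction of e.\<close>
lemma uniform_OM_erase_exchange:
  assumes U: "uniform_OM E C d" and "0 < d" "e \<in> E" "X \<in> C" "e \<notin> supp X"
  obtains Y where "Y \<in> C" "supp (erase e Y) \<noteq> {}" "supp (erase e Y) \<subset> supp X"
proof -
  have X: "card (supp X) = d + 1" "supp X \<subseteq> E" "finite (supp X)"
    using uniform_OM_supp[OF U assms(4)] uniform_OM_finite_supp[OF U assms(4)] by auto
  then obtain a where a: "a \<in> supp X" using \<open>0 < d\<close> by fastforce
  have "insert e (supp X - {a}) \<subseteq> E" "card (insert e (supp X - {a})) = d + 1"
    using X \<open>e \<in> E\<close> a assms(5) by auto
  then obtain Y where Y: "Y \<in> C" "supp Y = insert e (supp X - {a})"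
    by (rule uniform_OM_obtain_circuit[OF U])
  have "supp (erase e Y) = supp X - {a}" using Y(2) assms(5) by auto
  moreover have "card (supp X - {a}) = d" using X(1) a by (simp add: card_Diff_singleton)
  ultimately show thesis using that[OF Y(1)] a \<open>0 < d\<close>
    by (metis card.empty less_not_refl Diff_iff psubsetI insertI1 subset_insertI Diff_subset)
qed

lemma contraction_uniform_OM:
  assumes U: "uniform_OM E C d" and "0 < d" "e \<in> E"
  shows "contraction (E, C) e = (E - {e}, erase e ` {X \<in> C. e \<in> supp X})"
proof -
  define D where "D = erase e ` C - {({}, {})}"
  have card_D: "d \<le> card (supp W)" and finite_D: "finite (supp W)" if W: "W \<in> D" for W
  proof -
    obtain X where "X \<in> C" "W = erase e X" using W unfolding D_def by blast
    then show "d \<le> card (supp W)" "finite (supp W)"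
      using uniform_OM_supp[OF U, of X] uniform_OM_finite_supp[OF U, of X]
      by (simp_all add: card_Diff_singleton_if)
  qed
  have "{W \<in> D. \<forall>Y\<in>D. supp Y \<subseteq> supp W \<longrightarrow> supp Y = supp W} = erase e ` {X \<in> C. e \<in> supp X}"
  proof (intro equalityI subsetI)
    fix W assume "W \<in> {W \<in> D. \<forall>Y\<in>D. supp Y \<subseteq> supp W \<longrightarrow> supp Y = supp W}"
    then have W: "W \<in> D" and minimal: "\<And>Y. Y \<in> D \<Longrightarrow> supp Y \<subseteq> supp W \<Longrightarrow> supp Y = supp W"
      by auto
    obtain X where X: "X \<in> C" "W = erase e X" using W unfolding D_def by blast
    have "e \<in> supp X"
    proof (rule ccontr)
      assume e: "e \<notin> supp X"
      then obtain Y where Y: "Y \<in> C" "supp (erase e Y) \<noteq> {}" "supp (erase e Y) \<subset> supp X"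
        by (rule uniform_OM_erase_exchange[OF U \<open>0 < d\<close> \<open>e \<in> E\<close> X(1)])
      then have "erase e Y \<in> D" unfolding D_def by (metis DiffI image_eqI singletonD supp_empty)
      moreover have "supp W = supp X" using X(2) e by simp
      ultimately show False using minimal Y(3) by blast
    qed
    then show "W \<in> erase e ` {X \<in> C. e \<in> supp X}" using X by blast
  next
    fix W assume "W \<in> erase e ` {X \<in> C. e \<in> supp X}"
    then obtain X where X: "X \<in> C" "e \<in> supp X" "W = erase e X" by blast
    have card_W: "card (supp W) = d" using uniform_OM_supp[OF U X(1)] X by simp
    then have "W \<noteq> ({}, {})" using \<open>0 < d\<close> by (metis card.empty less_not_refl supp_empty)
    then have "W \<in> D" using X unfolding D_def by blast
    moreover have "supp Y = supp W" if "Y \<in> D" "supp Y \<subseteq> supp W" for Y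
      using card_subset_eq[OF finite_D[OF \<open>W \<in> D\<close>] that(2)] card_D[OF that(1)] card_W
        card_mono[OF finite_D[OF \<open>W \<in> D\<close>] that(2)] by simp
    ultimately show "W \<in> {W \<in> D. \<forall>Y\<in>D. supp Y \<subseteq> supp W \<longrightarrow> supp Y = supp W}" by blast
  qed
  moreover have "(\<lambda>X. (fst X - {e}, snd X - {e})) = erase e"
    by (simp add: erase_def fun_eq_iff)
  ultimately show ?thesis unfolding contraction_def Let_def by (simp only: fst_conv snd_conv D_def)
qed

lemma supp_erase_circuits:
  assumes U: "uniform_OM E C (Suc d)" and "e \<in> E"
  shows "supp ` erase e ` {X \<in> C. e \<in> supp X} = {I. I \<subseteq> E - {e} \<and> card I = d + 1}"
proof (intro equalityI subsetI)
  fix I assume I: "I \<in> {I. I \<subseteq> E - {e} \<and> card I = d + 1}"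
  then have "finite I" using uniform_OM_finite[OF U] by (auto intro: finite_subset)
  moreover have "e \<notin> I" using I by blast
  ultimately have "insert e I \<subseteq> E" "card (insert e I) = Suc d + 1" using I \<open>e \<in> E\<close> by auto
  then obtain X where "X \<in> C" "supp X = insert e I" by (rule uniform_OM_obtain_circuit[OF U])
  moreover have "supp (erase e X) = I" using calculation(2) I by auto
  ultimately show "I \<in> supp ` erase e ` {X \<in> C. e \<in> supp X}"
    by (metis (mono_tags, lifting) image_eqI insertI1 mem_Collect_eq)
next
  fix I assume "I \<in> supp ` erase e ` {X \<in> C. e \<in> supp X}"
  then obtain X where "X \<in> C" "e \<in> supp X" "I = supp X - {e}" by auto
  then show "I \<in> {I. I \<subseteq> E - {e} \<and> card I = d + 1}"
    using uniform_OM_supp[OF U \<open>X \<in> C\<close>] uniform_OM_finite_supp[OF U \<open>X \<in> C\<close>] by auto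
qed

lemma contraction_oriented_matroid_corank_two:
  assumes U: "uniform_OM E C (Suc d)" and card_E: "card E = Suc d + 2" and "e \<in> E"
  shows "oriented_matroid (E - {e}) (erase e ` {X \<in> C. e \<in> supp X})"
    (is "oriented_matroid _ ?C")
proof (rule oriented_matroidI)
  have OM: "oriented_matroid E C" using U unfolding uniform_OM_def by simp
  have supp_C: "supp Y \<subseteq> E - {e}" "card (supp Y) = d + 1" if "Y \<in> ?C" for Y
  proof -
    have "supp Y \<in> supp ` ?C" using that by (rule imageI)
    then show "supp Y \<subseteq> E - {e}" "card (supp Y) = d + 1"
      unfolding supp_erase_circuits[OF U \<open>e \<in> E\<close>] by simp_all
  qed
  show "finite (E - {e})" using uniform_OM_finite[OF U] by simp
  show "({}, {}) \<notin> ?C"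
  proof
    assume "({}, {}) \<in> ?C"
    from supp_C(2)[OF this] show False by simp
  qed
  show "fst Y \<inter> snd Y = {}" "supp Y \<subseteq> E - {e}" "neg Y \<in> ?C" if Y: "Y \<in> ?C" for Y
  proof -
    obtain X where X: "X \<in> C" "e \<in> supp X" "Y = erase e X" using Y by blast
    show "fst Y \<inter> snd Y = {}" using oriented_matroid_disjoint[OF OM X(1)] X(3) by auto
    show "supp Y \<subseteq> E - {e}" by (rule supp_C(1)[OF Y])
    have "neg X \<in> C" by (rule oriented_matroid_neg[OF OM X(1)])
    then show "neg Y \<in> ?C" using X(2,3) erase_neg by (metis (mono_tags) image_eqI mem_Collect_eq supp_neg)
  qed
  show "X' = Y' \<or> X' = neg Y'" if h: "X' \<in> ?C" "Y' \<in> ?C" "supp X' \<subseteq> supp Y'" for X' Y'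
  proof -
    obtain X Y where X: "X \<in> C" "e \<in> supp X" "X' = erase e X"
      and Y: "Y \<in> C" "e \<in> supp Y" "Y' = erase e Y" using h(1,2) by blast
    have "finite (supp Y')" using uniform_OM_finite_supp[OF U Y(1)] Y(3) by simp
    then have "supp X' = supp Y'" using card_subset_eq h(3) supp_C(2)[OF h(1)] supp_C(2)[OF h(2)] by metis
    then have "supp X \<subseteq> supp Y" using X Y by auto
    then have "X = Y \<or> X = neg Y" by (rule oriented_matroid_supp_subset[OF OM X(1) Y(1)])
    then show ?thesis using X(3) Y(3) erase_neg by metis
  qed
  show "\<exists>Z\<in>?C. fst Z \<subseteq> fst X' \<union> fst Y' - {f} \<and> snd Z \<subseteq> snd X' \<union> snd Y' - {f}"
    if h: "X' \<in> ?C" "Y' \<in> ?C" "X' \<noteq> neg Y'" "f \<in> fst X' \<inter> snd Y'" for X' Y' f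
  proof -
    obtain X Y where X: "X \<in> C" "e \<in> supp X" "X' = erase e X"
      and Y: "Y \<in> C" "e \<in> supp Y" "Y' = erase e Y" using h(1,2) by blast
    have "X \<noteq> neg Y" using h(3) X(3) Y(3) erase_neg by metis
    moreover have f: "f \<in> fst X \<inter> snd Y" "f \<noteq> e" using h(4) X(3) Y(3) by auto
    ultimately obtain Z where Z: "Z \<in> C" "fst Z \<subseteq> fst X \<union> fst Y - {f}" "snd Z \<subseteq> snd X \<union> snd Y - {f}"
      using oriented_matroid_elimination[OF OM X(1) Y(1)] by blast
    have "f \<in> E" using f(1) uniform_OM_supp(1)[OF U X(1)] unfolding supp_def by blast
    moreover have "f \<notin> supp Z" using Z(2,3) unfolding supp_def by blast
    ultimately have "supp Z = E - {f}"
      using uniform_OM_corank_two_supp[OF U _ Z(1)] card_E by simp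
    then have "erase e Z \<in> ?C" using Z(1) \<open>e \<in> E\<close> f(2) by auto
    then show ?thesis using Z X(3) Y(3) by (intro bexI[of _ "erase e Z"]) auto
  qed
qed

lemma contraction_uniform_OM_corank_two:
  assumes "uniform_OM E C (Suc d)" "card E = Suc d + 2" "e \<in> E"
  shows "uniform_OM (E - {e}) (erase e ` {X \<in> C. e \<in> supp X}) d"
  using contraction_oriented_matroid_corank_two[OF assms] supp_erase_circuits[OF assms(1,3)] assms(2,3)
  unfolding uniform_OM_def by simp

lemma minor_trans: "minor N M \<Longrightarrow> minor M L \<Longrightarrow> minor N L"
  by (induction rule: minor.induct) (auto intro: minor.intros)

lemma uniform_OM_restriction_minor:
  assumes "uniform_OM E C d" "d + 2 \<le> card E"
  shows "\<exists>E' C'. minor (E', C') (E, C) \<and> card E' = d + 2 \<and> uniform_OM E' C' d"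
  using assms
proof (induction "card E - (d + 2)" arbitrary: E C)
  case 0
  then show ?case by (intro exI[of _ E] exI[of _ C]) (simp add: minor_refl)
next
  case (Suc k)
  obtain e where "e \<in> E" using Suc.hyps(2) by fastforce
  let ?N = "deletion (E, C) e"
  have N: "?N = (E - {e}, {X \<in> C. e \<notin> supp X})" by (simp add: deletion_def)
  have card_N: "card (E - {e}) = card E - 1" using \<open>e \<in> E\<close> by simp
  have "uniform_OM (E - {e}) {X \<in> C. e \<notin> supp X} d"
    using deletion_uniform_OM[OF Suc.prems(1) \<open>e \<in> E\<close>] Suc.hyps(2) by simp
  then obtain E' C' where "minor (E', C') ?N" "card E' = d + 2" "uniform_OM E' C' d"
    using Suc.hyps(1)[of "E - {e}"] Suc.hyps(2) card_N unfolding N by fastforce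
  moreover have "minor ?N (E, C)" by (rule minor_del[OF minor_refl]) (simp add: \<open>e \<in> E\<close>)
  ultimately show ?case by (blast intro: minor_trans)
qed

lemma uniform_OM_corank_two_contraction_minor:
  assumes "uniform_OM E C d" "card E = d + 2" "m \<le> d"
  shows "\<exists>E' C'. minor (E', C') (E, C) \<and> card E' = m + 2 \<and> uniform_OM E' C' m"
  using assms
proof (induction d arbitrary: E C)
  case 0
  then show ?case by (intro exI[of _ E] exI[of _ C]) (simp add: minor_refl)
next
  case (Suc d)
  show ?case
  proof (cases "m = Suc d")
    case True
    then show ?thesis using Suc.prems by (intro exI[of _ E] exI[of _ C]) (simp add: minor_refl)
  next
    case False
    obtain e where "e \<in> E" using Suc.prems(2) by fastforce
    let ?N = "contraction (E, C) e"
    have N: "?N = (E - {e}, erase e ` {X \<in> C. e \<in> supp X})"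
      using contraction_uniform_OM[OF Suc.prems(1) _ \<open>e \<in> E\<close>] by simp
    have "uniform_OM (E - {e}) (erase e ` {X \<in> C. e \<in> supp X}) d"
      using contraction_uniform_OM_corank_two[OF Suc.prems(1)] Suc.prems(2) \<open>e \<in> E\<close> by simp
    then obtain E' C' where "minor (E', C') ?N" "card E' = m + 2" "uniform_OM E' C' m"
      using Suc.IH[of "E - {e}"] Suc.prems(2,3) False \<open>e \<in> E\<close> unfolding N by fastforce
    moreover have "minor ?N (E, C)" by (rule minor_con[OF minor_refl]) (simp add: \<open>e \<in> E\<close>)
    ultimately show ?thesis by (blast intro: minor_trans)
  qed
qed

section \<open>Sign vectors\<close>

definition sign_at :: "'a signed \<Rightarrow> 'a \<Rightarrow> int" where
  "sign_at X j = (if j \<in> fst X then 1 else if j \<in> snd X then -1 else 0)"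

lemma sign_at_eq_zero_iff: "sign_at X j = 0 \<longleftrightarrow> j \<notin> supp X"
  unfolding sign_at_def supp_def by auto

lemma sign_at_eq_one_iff: "sign_at X j = 1 \<longleftrightarrow> j \<in> fst X"
  unfolding sign_at_def by auto

lemma sign_at_eq_minus_one_iff: "fst X \<inter> snd X = {} \<Longrightarrow> sign_at X j = -1 \<longleftrightarrow> j \<in> snd X"
  unfolding sign_at_def by auto

lemma sign_at_unit: "j \<in> supp X \<Longrightarrow> sign_at X j = 1 \<or> sign_at X j = -1"
  unfolding sign_at_def supp_def by auto

lemma sign_at_neg: "fst X \<inter> snd X = {} \<Longrightarrow> sign_at (neg X) j = - sign_at X j"
  unfolding sign_at_def neg_def by auto

lemma signed_eqI:
  assumes "fst X \<inter> snd X = {}" "fst Y \<inter> snd Y = {}" "\<And>j. sign_at X j = sign_at Y j"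
  shows "X = Y"
proof -
  have "j \<in> fst X \<longleftrightarrow> j \<in> fst Y" "j \<in> snd X \<longleftrightarrow> j \<in> snd Y" for j
    using assms(3)[of j] sign_at_eq_one_iff[of _ j]
      sign_at_eq_minus_one_iff[OF assms(1), of j] sign_at_eq_minus_one_iff[OF assms(2), of j] by metis+
  then have "fst X = fst Y" "snd X = snd Y" by blast+
  then show ?thesis by (simp add: prod_eq_iff)
qed

lemma sign_at_conformal:
  assumes "fst Z \<subseteq> fst X \<union> fst Y" "snd Z \<subseteq> snd X \<union> snd Y"
    and "fst X \<inter> snd X = {}" "fst Y \<inter> snd Y = {}"
  shows "sign_at Z j = sign_at X j \<or> sign_at Z j = sign_at Y j \<or> sign_at Z j = 0"
  using assms unfolding sign_at_def by auto

lemma supp_reorient [simp]: "supp (reorient A X) = supp X"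
  unfolding reorient_def supp_def by auto

lemma reorient_neg: "reorient A (neg X) = neg (reorient A X)"
  unfolding reorient_def neg_def by auto

lemma relabel_neg: "relabel f (neg X) = neg (relabel f X)"
  unfolding relabel_def neg_def by auto

lemma disjoint_reorient: "fst X \<inter> snd X = {} \<Longrightarrow> fst (reorient A X) \<inter> snd (reorient A X) = {}"
  unfolding reorient_def by auto

lemma disjoint_relabel:
  assumes "inj_on f S" "supp X \<subseteq> S" "fst X \<inter> snd X = {}"
  shows "fst (relabel f X) \<inter> snd (relabel f X) = {}"
proof -
  have "f ` fst X \<inter> f ` snd X = f ` (fst X \<inter> snd X)"
    using assms(1,2) unfolding supp_def by (intro inj_on_image_Int[symmetric]) auto
  then show ?thesis using assms(3) unfolding relabel_def by simp
qed

lemma sign_at_reorient: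
  "fst X \<inter> snd X = {} \<Longrightarrow> sign_at (reorient A X) j = (if j \<in> A then -1 else 1) * sign_at X j"
  unfolding reorient_def sign_at_def by auto

lemma sign_at_relabel:
  "inj_on f S \<Longrightarrow> supp X \<subseteq> S \<Longrightarrow> j \<in> S \<Longrightarrow> sign_at (relabel f X) (f j) = sign_at X j"
  unfolding relabel_def sign_at_def supp_def inj_on_def by auto

lemma sign_at_relabel_outside: "supp X \<subseteq> S \<Longrightarrow> b \<notin> f ` S \<Longrightarrow> sign_at (relabel f X) b = 0"
  unfolding relabel_def sign_at_def supp_def by auto

section \<open>The alternating oriented matroid of corank two\<close>

lemma card_add_one_subsets:
  assumes "finite S"
  shows "{I. I \<subseteq> S \<and> card I + 1 = card S} = (\<lambda>a. S - {a}) ` S"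
proof (intro equalityI subsetI)
  fix I assume I: "I \<in> {I. I \<subseteq> S \<and> card I + 1 = card S}"
  moreover have "finite I" using I assms finite_subset by blast
  ultimately have "card (S - I) = card S - card I" by (simp add: card_Diff_subset)
  moreover have "card I + 1 = card S" using I by simp
  ultimately have "card (S - I) = 1" by arith
  then obtain a where a: "S - I = {a}" by (rule card_1_singletonE)
  then show "I \<in> (\<lambda>a. S - {a}) ` S" using I by blast
next
  fix I assume "I \<in> (\<lambda>a. S - {a}) ` S"
  then obtain a where "a \<in> S" "I = S - {a}" by blast
  moreover from this have "0 < card S" using assms card_gt_0_iff by blast
  ultimately show "I \<in> {I. I \<subseteq> S \<and> card I + 1 = card S}"
    using assms by (simp add: card_Diff_singleton)
qed

definition alt_circuit :: "nat \<Rightarrow> nat \<Rightarrow> nat signed" where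
  "alt_circuit m a = (odd_part ({1..m} - {a}), even_part ({1..m} - {a}))"

lemma alt_circuits_corank_two:
  "alt_circuits (n + 2) n = (\<Union>a\<in>{1..n + 2}. {alt_circuit (n + 2) a, neg (alt_circuit (n + 2) a)})"
proof -
  have "{I. I \<subseteq> {1..n + 2} \<and> card I = n + 1} = (\<lambda>a. {1..n + 2} - {a}) ` {1..n + 2}"
    using card_add_one_subsets[of "{1..n + 2}"] by simp
  then show ?thesis unfolding alt_circuits_def by (simp add: alt_circuit_def neg_def)
qed

lemma even_card_less_punctured:
  fixes m :: nat
  assumes "a \<in> {1..m}" "i \<in> {1..m}" "i \<noteq> a"
  shows "even (card {j \<in> {1..m} - {a}. j < i}) \<longleftrightarrow> odd i = (i < a)"
proof -
  have "{j \<in> {1..m} - {a}. j < i} = {1..<i} - {a}" using assms(2) by auto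
  then have "card {j \<in> {1..m} - {a}. j < i} = i - 1 - (if a < i then 1 else 0)"
    using assms(1) by (simp add: card_Diff_singleton_if)
  moreover have "1 \<le> a" "1 \<le> i" using assms(1,2) by auto
  then have "even (i - 1 - (if a < i then 1 else 0)) \<longleftrightarrow> odd i = (i < a)"
    using assms(3) by (cases "a < i") simp_all
  ultimately show ?thesis by simp
qed

lemma sign_at_alt_circuit:
  fixes m :: nat
  assumes "a \<in> {1..m}"
  shows "sign_at (alt_circuit m a) b =
    (if b \<in> {1..m} \<and> b \<noteq> a then (if odd b = (b < a) then 1 else -1) else 0)"
proof (cases "b \<in> {1..m} \<and> b \<noteq> a")
  case True
  then have "b \<in> fst (alt_circuit m a) \<longleftrightarrow> odd b = (b < a)"
    and "b \<in> snd (alt_circuit m a) \<longleftrightarrow> \<not> (odd b = (b < a))"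
    using even_card_less_punctured[OF assms, of b]
    unfolding alt_circuit_def odd_part_def even_part_def by auto
  then show ?thesis using True unfolding sign_at_def by auto
next
  case False
  moreover have "fst (alt_circuit m a) \<subseteq> {1..m} - {a}" "snd (alt_circuit m a) \<subseteq> {1..m} - {a}"
    unfolding alt_circuit_def odd_part_def even_part_def by auto
  ultimately have "b \<notin> fst (alt_circuit m a)" "b \<notin> snd (alt_circuit m a)" by blast+
  then show ?thesis using False unfolding sign_at_def by auto
qed

lemma disjoint_alt_circuit: "fst (alt_circuit m a) \<inter> snd (alt_circuit m a) = {}"
  unfolding alt_circuit_def odd_part_def even_part_def by auto

section \<open>Uniform oriented matroids of corank two\<close>

lemma card_predecessors_less:
  assumes "finite A" "strict_linear_order_on A r" "r \<subseteq> A \<times> A" "(a, b) \<in> r"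
  shows "card {c. (c, a) \<in> r} < card {c. (c, b) \<in> r}"
proof (rule psubset_card_mono)
  show "finite {c. (c, b) \<in> r}" using assms(1,3) by (auto intro: finite_subset)
  have "trans r" "irrefl r" using assms(2) unfolding strict_linear_order_on_def by auto
  then show "{c. (c, a) \<in> r} \<subset> {c. (c, b) \<in> r}"
    using assms(4) unfolding trans_def irrefl_def by blast
qed

lemma bij_betw_card_predecessors:
  assumes "finite A" "strict_linear_order_on A r" "r \<subseteq> A \<times> A"
  shows "bij_betw (\<lambda>b. card {a. (a, b) \<in> r} + 1) A {1..card A}"
proof -
  let ?rank = "\<lambda>b. card {a. (a, b) \<in> r} + 1"
  have inj: "inj_on ?rank A"
  proof (rule inj_onI)
    fix a b assume "a \<in> A" "b \<in> A" and eq: "?rank a = ?rank b"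
    show "a = b"
    proof (rule ccontr)
      assume "a \<noteq> b"
      then have "(a, b) \<in> r \<or> (b, a) \<in> r"
        using assms(2) \<open>a \<in> A\<close> \<open>b \<in> A\<close> unfolding strict_linear_order_on_def total_on_def by blast
      then show False using card_predecessors_less[OF assms] eq by fastforce
    qed
  qed
  have "?rank ` A \<subseteq> {1..card A}"
  proof
    fix c assume "c \<in> ?rank ` A"
    then obtain b where b: "b \<in> A" "c = ?rank b" by blast
    have "irrefl r" using assms(2) unfolding strict_linear_order_on_def by simp
    then have "{a. (a, b) \<in> r} \<subseteq> A - {b}" using assms(3) unfolding irrefl_def by blast
    then have "card {a. (a, b) \<in> r} \<le> card (A - {b})" using assms(1) by (simp add: card_mono)
    moreover have "0 < card A" using b(1) assms(1) card_gt_0_iff by blast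
    ultimately show "c \<in> {1..card A}" using b assms(1) by (simp add: card_Diff_singleton)
  qed
  moreover have "card (?rank ` A) = card {1..card A}" using card_image[OF inj] by simp
  ultimately have "?rank ` A = {1..card A}" by (simp add: card_subset_eq)
  then show ?thesis using inj unfolding bij_betw_def by simp
qed

locale uniform_corank_two =
  fixes V :: "'a set" and C :: "'a signed set" and n :: nat
  assumes uniform: "uniform_OM V C n" and card_V: "card V = n + 2"
begin

lemma OM: "oriented_matroid V C"
  using uniform unfolding uniform_OM_def by simp

lemma finite_V: "finite V"
  using uniform by (rule uniform_OM_finite)

definition circuit_without :: "'a \<Rightarrow> 'a signed" where
  "circuit_without k = (SOME X. X \<in> C \<and> supp X = V - {k})"

lemma circuit_without:
  assumes "k \<in> V"
  shows "circuit_without k \<in> C" "supp (circuit_without k) = V - {k}"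
proof -
  have "card (V - {k}) = n + 1" using assms card_V finite_V by simp
  then obtain X where "X \<in> C" "supp X = V - {k}"
    by (rule uniform_OM_obtain_circuit[OF uniform Diff_subset])
  then have "\<exists>X. X \<in> C \<and> supp X = V - {k}" by blast
  then show "circuit_without k \<in> C" "supp (circuit_without k) = V - {k}"
    unfolding circuit_without_def by (metis (mono_tags, lifting) someI_ex)+
qed

lemma circuit_without_disjoint: "k \<in> V \<Longrightarrow> fst (circuit_without k) \<inter> snd (circuit_without k) = {}"
  using oriented_matroid_disjoint[OF OM circuit_without(1)] .

lemma circuits_eq: "C = (\<Union>k\<in>V. {circuit_without k, neg (circuit_without k)})"
proof (intro equalityI subsetI)
  fix X assume X: "X \<in> C"
  have "supp X \<in> {I. I \<subseteq> V \<and> card I + 1 = card V}"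
    using uniform_OM_supp[OF uniform X] card_V by simp
  then obtain k where k: "k \<in> V" "supp X = V - {k}"
    unfolding card_add_one_subsets[OF finite_V] by blast
  then have "X = circuit_without k \<or> X = neg (circuit_without k)"
    using oriented_matroid_supp_subset[OF OM X circuit_without(1)] circuit_without(2) by simp
  then show "X \<in> (\<Union>k\<in>V. {circuit_without k, neg (circuit_without k)})" using k(1) by blast
qed (auto simp: circuit_without(1) oriented_matroid_neg[OF OM])

definition sig :: "'a \<Rightarrow> 'a \<Rightarrow> int" where
  "sig k j = sign_at (circuit_without k) j"

lemma sig_self: "k \<in> V \<Longrightarrow> sig k k = 0"
  unfolding sig_def by (simp add: sign_at_eq_zero_iff circuit_without)

lemma sig_unit: "k \<in> V \<Longrightarrow> j \<in> V \<Longrightarrow> j \<noteq> k \<Longrightarrow> sig k j = 1 \<or> sig k j = -1"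
  unfolding sig_def by (rule sign_at_unit) (simp add: circuit_without)

lemma scaled_circuit_without:
  assumes "k \<in> V" "\<epsilon> = 1 \<or> \<epsilon> = -1"
  obtains Y where "Y \<in> C" "supp Y = V - {k}" "fst Y \<inter> snd Y = {}" "\<And>j. sign_at Y j = \<epsilon> * sig k j"
  using assms(2)
proof
  assume "\<epsilon> = 1"
  then show thesis
    using that[of "circuit_without k"] circuit_without[OF assms(1)] circuit_without_disjoint[OF assms(1)]
    unfolding sig_def by simp
next
  assume "\<epsilon> = -1"
  let ?Y = "neg (circuit_without k)"
  have "?Y \<in> C" "supp ?Y = V - {k}"
    using circuit_without[OF assms(1)] oriented_matroid_neg[OF OM] by simp_all
  moreover have "fst ?Y \<inter> snd ?Y = {}"
    using circuit_without_disjoint[OF assms(1)] unfolding neg_def by auto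
  moreover have "sign_at ?Y j = \<epsilon> * sig k j" for j
    using sign_at_neg[OF circuit_without_disjoint[OF assms(1)]] \<open>\<epsilon> = -1\<close> unfolding sig_def by simp
  ultimately show thesis by (rule that)
qed

lemma circuit_multiple_of_circuit_without:
  assumes "Z \<in> C" "f \<in> V" "supp Z = V - {f}"
  obtains \<tau> where "\<tau> = 1 \<or> \<tau> = -1" "\<And>j. sign_at Z j = \<tau> * sig f j"
proof -
  have "Z = circuit_without f \<or> Z = neg (circuit_without f)"
    using oriented_matroid_supp_subset[OF OM assms(1) circuit_without(1)[OF assms(2)]]
      circuit_without(2)[OF assms(2)] assms(3) by simp
  then show thesis
  proof
    assume "Z = circuit_without f"
    then show thesis using that[of 1] unfolding sig_def by simp
  next
    assume "Z = neg (circuit_without f)"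
    then show thesis
      using that[of "-1"] sign_at_neg[OF circuit_without_disjoint[OF assms(2)]] unfolding sig_def by simp
  qed
qed

text \<open>Eliminating the element f between the two circuits avoiding k and l, scaled so that f has
  opposite signs in them, yields a multiple of the circuit avoiding f.\<close>
lemma sig_elimination:
  assumes "k \<in> V" "l \<in> V" "f \<in> V" "k \<noteq> l" "k \<noteq> f" "l \<noteq> f"
  obtains \<tau> where "\<tau> = 1 \<or> \<tau> = -1"
    "\<tau> * sig f k = - sig l f * sig l k"
    "\<tau> * sig f l = sig k f * sig k l"
    "\<And>j. j \<in> V \<Longrightarrow> j \<noteq> f \<Longrightarrow> sig k f * sig k j = - sig l f * sig l j \<Longrightarrow>
       \<tau> * sig f j = sig k f * sig k j"
proof -
  have a: "sig k f = 1 \<or> sig k f = -1" using sig_unit[of k f] assms by simp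
  have b: "- sig l f = 1 \<or> - sig l f = -1" using sig_unit[of l f] assms by auto
  obtain Y where Y: "Y \<in> C" "supp Y = V - {k}" "fst Y \<inter> snd Y = {}"
    "\<And>j. sign_at Y j = sig k f * sig k j"
    using scaled_circuit_without[OF assms(1) a] by blast
  obtain Y' where Y': "Y' \<in> C" "supp Y' = V - {l}" "fst Y' \<inter> snd Y' = {}"
    "\<And>j. sign_at Y' j = - sig l f * sig l j"
    using scaled_circuit_without[OF assms(2) b] by blast
  have "sign_at Y f = 1" using Y(4)[of f] a by auto
  moreover have "sign_at Y' f = -1" using Y'(4)[of f] b by auto
  ultimately have "f \<in> fst Y \<inter> snd Y'"
    using sign_at_eq_one_iff[of Y f] sign_at_eq_minus_one_iff[OF Y'(3), of f] by simp
  moreover have "k \<in> supp (neg Y')" "k \<notin> supp Y" using Y(2) Y'(2) assms(1,4) by simp_all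
  then have "Y \<noteq> neg Y'" by metis
  ultimately obtain Z where Z: "Z \<in> C" "fst Z \<subseteq> fst Y \<union> fst Y' - {f}" "snd Z \<subseteq> snd Y \<union> snd Y' - {f}"
    using oriented_matroid_elimination[OF OM Y(1) Y'(1)] by metis
  have "f \<notin> supp Z" using Z(2,3) unfolding supp_def by blast
  then have supp_Z: "supp Z = V - {f}"
    using uniform_OM_corank_two_supp[OF uniform card_V Z(1) assms(3)] by simp
  obtain \<tau> where \<tau>: "\<tau> = 1 \<or> \<tau> = -1" "\<And>j. sign_at Z j = \<tau> * sig f j"
    using circuit_multiple_of_circuit_without[OF Z(1) assms(3) supp_Z] by blast
  have conformal: "sign_at Z j = sign_at Y j \<or> sign_at Z j = sign_at Y' j" "sign_at Z j \<noteq> 0"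
    if "j \<in> V" "j \<noteq> f" for j
    using sign_at_conformal[of Z Y Y' j] Z(2,3) Y(3) Y'(3) sign_at_eq_zero_iff[of Z j] supp_Z that
    by auto
  have "sign_at Y k = 0" "sign_at Y' l = 0" using Y(2) Y'(2) by (simp_all add: sign_at_eq_zero_iff)
  then have "sign_at Z k = sign_at Y' k" "sign_at Z l = sign_at Y l"
    using conformal[OF assms(1,5)] conformal[OF assms(2,6)] by auto
  show thesis
  proof (rule that[OF \<tau>(1)])
    show "\<tau> * sig f k = - sig l f * sig l k" "\<tau> * sig f l = sig k f * sig k l"
      using \<open>sign_at Z k = sign_at Y' k\<close> \<open>sign_at Z l = sign_at Y l\<close> by (simp_all add: \<tau>(2) Y(4) Y'(4))
    show "\<tau> * sig f j = sig k f * sig k j"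
      if "j \<in> V" "j \<noteq> f" "sig k f * sig k j = - sig l f * sig l j" for j
      using conformal(1)[OF that(1,2)] that(3) by (auto simp: \<tau>(2) Y(4) Y'(4))
  qed
qed

lemma sig_triangle:
  assumes "k \<in> V" "l \<in> V" "f \<in> V" "k \<noteq> l" "k \<noteq> f" "l \<noteq> f"
  shows "sig f k * sig f l * sig k f * sig k l * sig l f * sig l k = -1"
proof -
  obtain \<tau> where "\<tau> = 1 \<or> \<tau> = -1" "\<tau> * sig f k = - sig l f * sig l k" "\<tau> * sig f l = sig k f * sig k l"
    by (rule sig_elimination[OF assms])
  then have "sig f k * sig f l = - (sig l f * sig l k) * (sig k f * sig k l)"
    by (metis minus_mult_minus mult.commute mult.left_commute mult_1 mult_minus1)
  moreover have "sig l f * sig l k = 1 \<or> sig l f * sig l k = -1"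
    and "sig k f * sig k l = 1 \<or> sig k f * sig k l = -1"
    using sig_unit[of l f] sig_unit[of l k] sig_unit[of k f] sig_unit[of k l] assms by auto
  moreover have "sig f k * sig f l * sig k f * sig k l * sig l f * sig l k
      = (sig f k * sig f l) * (sig k f * sig k l) * (sig l f * sig l k)"
    by (simp only: mult_ac)
  ultimately show ?thesis by auto
qed

definition base :: 'a where
  "base = (SOME p. p \<in> V)"

lemma base_in_V: "base \<in> V"
proof -
  have "V \<noteq> {}" using card_V by auto
  then show ?thesis unfolding base_def by (simp add: some_in_eq)
qed

text \<open>Rescaling the circuit avoiding k by row_sign k and reorienting each element j by col_sign j
  normalises the signs so that ord_sign base j = 1 for all j; ord_sign then encodes a linear order.\<close>
definition col_sign :: "'a \<Rightarrow> int" where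
  "col_sign j = (if j = base then 1 else sig base j)"

definition row_sign :: "'a \<Rightarrow> int" where
  "row_sign k = (if k = base then 1 else - sig k base)"

definition ord_sign :: "'a \<Rightarrow> 'a \<Rightarrow> int" where
  "ord_sign k j = row_sign k * col_sign j * sig k j"

lemma col_sign_unit: "j \<in> V \<Longrightarrow> col_sign j = 1 \<or> col_sign j = -1"
  using sig_unit[OF base_in_V, of j] unfolding col_sign_def by auto

lemma row_sign_unit: "k \<in> V \<Longrightarrow> row_sign k = 1 \<or> row_sign k = -1"
  using sig_unit[OF _ base_in_V, of k] unfolding row_sign_def by auto

lemma ord_sign_self: "k \<in> V \<Longrightarrow> ord_sign k k = 0"
  by (simp add: ord_sign_def sig_self)

lemma ord_sign_unit: "k \<in> V \<Longrightarrow> j \<in> V \<Longrightarrow> k \<noteq> j \<Longrightarrow> ord_sign k j = 1 \<or> ord_sign k j = -1"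
  using row_sign_unit[of k] col_sign_unit[of j] sig_unit[of k j] unfolding ord_sign_def by auto

lemma sig_eq_ord_sign: "k \<in> V \<Longrightarrow> j \<in> V \<Longrightarrow> sig k j = row_sign k * col_sign j * ord_sign k j"
  using row_sign_unit[of k] col_sign_unit[of j] unfolding ord_sign_def by auto

lemma ord_sign_base: "j \<in> V \<Longrightarrow> j \<noteq> base \<Longrightarrow> ord_sign base j = 1"
  using sig_unit[OF base_in_V, of j] unfolding ord_sign_def row_sign_def col_sign_def by auto

lemma ord_sign_to_base: "k \<in> V \<Longrightarrow> k \<noteq> base \<Longrightarrow> ord_sign k base = -1"
  using sig_unit[OF _ base_in_V, of k] unfolding ord_sign_def row_sign_def col_sign_def by auto

lemma ord_sign_off_base:
  "k \<noteq> base \<Longrightarrow> j \<noteq> base \<Longrightarrow> ord_sign k j = - sig k base * sig base j * sig k j"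
  unfolding ord_sign_def row_sign_def col_sign_def by simp

lemma ord_sign_antisym:
  assumes "k \<in> V" "j \<in> V" "k \<noteq> j"
  shows "ord_sign j k = - ord_sign k j"
proof (cases "k = base \<or> j = base")
  case True
  then show ?thesis using assms ord_sign_base ord_sign_to_base by auto
next
  case False
  then have "ord_sign k j * ord_sign j k = -1"
    using sig_triangle[of k j base] assms base_in_V by (simp add: ord_sign_off_base mult_ac)
  then show ?thesis using ord_sign_unit[OF assms] by auto
qed

text \<open>Transitivity uses the last clause of sig_elimination, for the circuits avoiding base and c
  with b eliminated.\<close>
lemma ord_sign_trans_off_base:
  assumes V: "b \<in> V" "c \<in> V" "d \<in> V" and distinct: "b \<noteq> c" "c \<noteq> d" "b \<noteq> d"
    and off_base: "b \<noteq> base" "c \<noteq> base" "d \<noteq> base"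
    and bc: "ord_sign b c = 1" and cd: "ord_sign c d = 1"
  shows "ord_sign b d = 1"
proof -
  have units: "sig b base = 1 \<or> sig b base = -1" "sig c base = 1 \<or> sig c base = -1"
    "sig base b = 1 \<or> sig base b = -1" "sig base c = 1 \<or> sig base c = -1"
    "sig base d = 1 \<or> sig base d = -1"
    using sig_unit[of b base] sig_unit[of c base] sig_unit[of base b] sig_unit[of base c]
      sig_unit[of base d] V off_base base_in_V by auto
  have sig_cd: "sig c d = - sig c base * sig base d"
    using cd units(2,5) by (auto simp: ord_sign_off_base off_base)
  have sig_bc: "sig b c = - sig b base * sig base c"
    using bc units(1,4) by (auto simp: ord_sign_off_base off_base)
  have "ord_sign c b = -1" using ord_sign_antisym[of b c] V distinct bc by simp
  then have sig_cb: "sig c b = sig c base * sig base b"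
    using units(2,3) by (auto simp: ord_sign_off_base off_base)
  obtain \<tau> where \<tau>: "\<tau> = 1 \<or> \<tau> = -1" "\<tau> * sig b c = sig base b * sig base c"
    "sig base b * sig base d = - sig c b * sig c d \<Longrightarrow> \<tau> * sig b d = sig base b * sig base d"
    by (rule sig_elimination[of base c b]) (use V distinct off_base base_in_V in auto)
  have "sig base b * sig base d = - sig c b * sig c d"
    using units(2) unfolding sig_cd sig_cb by auto
  then have "\<tau> * sig b d = sig base b * sig base d" by (rule \<tau>(3))
  moreover have "\<tau> = - sig b base * sig base b"
    using \<tau>(1,2) units(1,3,4) unfolding sig_bc by auto
  ultimately have "sig b d = - sig b base * sig base d"
    using units(1,3,5) by auto
  then show ?thesis using units(1,5) by (auto simp: ord_sign_off_base off_base)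
qed

lemma ord_sign_trans:
  assumes "b \<in> V" "c \<in> V" "d \<in> V" "ord_sign b c = 1" "ord_sign c d = 1"
  shows "ord_sign b d = 1"
proof -
  have "b \<noteq> c" "c \<noteq> d" using assms ord_sign_self by auto
  moreover have "b \<noteq> d" using assms ord_sign_antisym[of b c] \<open>b \<noteq> c\<close> by auto
  moreover have "c \<noteq> base" "d \<noteq> base"
    using assms ord_sign_to_base \<open>b \<noteq> c\<close> \<open>c \<noteq> d\<close> by auto
  ultimately show ?thesis
    using ord_sign_trans_off_base[OF assms(1-3)] assms(4,5) ord_sign_base assms(3) by (cases "b = base") auto
qed

definition precedes :: "'a rel" where
  "precedes = {(i, j). i \<in> V \<and> j \<in> V \<and> ord_sign i j = 1}"

lemma precedes_subset: "precedes \<subseteq> V \<times> V"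
  unfolding precedes_def by auto

lemma strict_linear_order_on_precedes: "strict_linear_order_on V precedes"
  unfolding strict_linear_order_on_def
proof (intro conjI)
  show "trans precedes"
  proof (rule transI)
    fix x y z assume "(x, y) \<in> precedes" "(y, z) \<in> precedes"
    then show "(x, z) \<in> precedes" using ord_sign_trans[of x y z] unfolding precedes_def by simp
  qed
  show "irrefl precedes"
  proof (rule irreflI)
    fix x show "(x, x) \<notin> precedes" using ord_sign_self[of x] unfolding precedes_def by simp
  qed
  show "total_on V precedes"
  proof (rule total_onI)
    fix x y assume "x \<in> V" "y \<in> V" "x \<noteq> y"
    then show "(x, y) \<in> precedes \<or> (y, x) \<in> precedes"
      using ord_sign_unit[of x y] ord_sign_antisym[of x y] unfolding precedes_def by auto
  qed
qed

definition label :: "'a \<Rightarrow> nat" where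
  "label j = card {i. (i, j) \<in> precedes} + 1"

lemma bij_label: "bij_betw label V {1..n + 2}"
  using bij_betw_card_predecessors[OF finite_V strict_linear_order_on_precedes precedes_subset] card_V
  unfolding label_def by simp

lemma label_less: "k \<in> V \<Longrightarrow> j \<in> V \<Longrightarrow> ord_sign k j = 1 \<Longrightarrow> label k < label j"
  using card_predecessors_less[OF finite_V strict_linear_order_on_precedes precedes_subset, of k j]
  unfolding label_def precedes_def by simp

lemma ord_sign_label:
  assumes "k \<in> V" "j \<in> V" "k \<noteq> j"
  shows "ord_sign k j = (if label k < label j then 1 else -1)"
proof (cases "ord_sign k j = 1")
  case True
  then show ?thesis using label_less[OF assms(1,2)] by simp
next
  case False
  then have "ord_sign k j = -1" "ord_sign j k = 1"
    using ord_sign_unit[OF assms] ord_sign_antisym[OF assms] by auto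
  then show ?thesis using label_less[OF assms(2,1)] by simp
qed

definition flipped :: "'a set" where
  "flipped = {j \<in> V. col_sign j * (-1) ^ label j = -1}"

lemma reorientation_sign: "j \<in> V \<Longrightarrow> (if j \<in> flipped then -1 else 1) = col_sign j * (-1) ^ label j"
  using col_sign_unit[of j] unfolding flipped_def by (auto simp: minus_one_power_iff)

lemma relabel_circuit_without:
  assumes "k \<in> V"
  shows "relabel label (reorient flipped (circuit_without k)) =
    (if row_sign k = 1 then alt_circuit (n + 2) (label k) else neg (alt_circuit (n + 2) (label k)))"
    (is "?X = ?A")
proof (rule signed_eqI)
  let ?W = "circuit_without k"
  have inj: "inj_on label V" using bij_label by (rule bij_betw_imp_inj_on)
  have supp: "supp (reorient flipped ?W) \<subseteq> V" using circuit_without(2)[OF assms] by simp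
  have label_k: "label k \<in> {1..n + 2}" using bij_betwE[OF bij_label] assms by blast
  have disj_W: "fst ?W \<inter> snd ?W = {}" by (rule circuit_without_disjoint[OF assms])
  show "fst ?X \<inter> snd ?X = {}" by (rule disjoint_relabel[OF inj supp disjoint_reorient[OF disj_W]])
  show "fst ?A \<inter> snd ?A = {}" using disjoint_alt_circuit by (auto simp: neg_def)
  have sign_A: "sign_at ?A b = row_sign k * sign_at (alt_circuit (n + 2) (label k)) b" for b
    using row_sign_unit[OF assms] sign_at_neg[OF disjoint_alt_circuit] by auto
  fix b
  show "sign_at ?X b = sign_at ?A b"
  proof (cases "b \<in> label ` V")
    case True
    then obtain j where j: "j \<in> V" "b = label j" by blast
    have "sign_at ?X b = (if j \<in> flipped then -1 else 1) * sig k j"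
      using sign_at_relabel[OF inj supp j(1)] sign_at_reorient[OF disj_W] j(2) unfolding sig_def by simp
    also have "\<dots> = row_sign k * sign_at (alt_circuit (n + 2) (label k)) b"
    proof (cases "j = k")
      case True
      then show ?thesis using sig_self[OF assms] sign_at_alt_circuit[OF label_k] j(2) by simp
    next
      case False
      have "label j \<noteq> label k" using inj False j(1) assms by (metis inj_on_eq_iff)
      moreover have "label j \<in> {1..n + 2}" using bij_betwE[OF bij_label] j(1) by blast
      moreover have "col_sign j * col_sign j = 1" using col_sign_unit[OF j(1)] by auto
      ultimately show ?thesis
        using reorientation_sign[OF j(1)] sig_eq_ord_sign[OF assms j(1)] ord_sign_label[OF assms j(1)] False
          sign_at_alt_circuit[OF label_k] j(2)
        by (auto simp: minus_one_power_iff)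
    qed
    finally show ?thesis using sign_A by simp
  next
    case False
    then have "\<not> (b \<in> {1..n + 2} \<and> b \<noteq> label k)" using bij_label by (auto simp: bij_betw_def)
    then have "sign_at (alt_circuit (n + 2) (label k)) b = 0"
      unfolding sign_at_alt_circuit[OF label_k] by (rule if_not_P)
    then show ?thesis using sign_at_relabel_outside[OF supp False] sign_A by simp
  qed
qed

theorem om_iso_alternating: "om_iso (V, C) (alternating_OM (n + 2) n)"
proof -
  let ?f = "\<lambda>X. relabel label (reorient flipped X)"
  let ?alt = "\<lambda>a. {alt_circuit (n + 2) a, neg (alt_circuit (n + 2) a)}"
  have pair: "?f ` {circuit_without k, neg (circuit_without k)} = ?alt (label k)" if "k \<in> V" for k
    using relabel_circuit_without[OF that] by (auto simp: reorient_neg relabel_neg)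
  have "?f ` C = ?f ` (\<Union>k\<in>V. {circuit_without k, neg (circuit_without k)})"
    using circuits_eq by (rule arg_cong)
  also have "\<dots> = (\<Union>k\<in>V. ?alt (label k))"
    by (simp only: image_UN pair cong: SUP_cong)
  also have "\<dots> = (\<Union>a\<in>label ` V. ?alt a)" by auto
  also have "\<dots> = alt_circuits (n + 2) n"
    using bij_label unfolding alt_circuits_corank_two bij_betw_def by simp
  finally have "alt_circuits (n + 2) n = ?f ` C" ..
  moreover have "flipped \<subseteq> V" unfolding flipped_def by blast
  ultimately show ?thesis
    unfolding om_iso_def alternating_OM_def using bij_label by auto
qed

end

theorem lemma11p3:
  fixes E :: "'a set" and C :: "'a signed set" and d :: nat
  assumes "uniform_OM E C d"
    and "d \<ge> 4"
    and "card E - d \<ge> 2"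
  shows "\<exists>N. minor N (E, C) \<and> om_iso N (alternating_OM 6 4)"
proof -
  have "d + 2 \<le> card E" using assms(3) by linarith
  then obtain E1 C1 where m1: "minor (E1, C1) (E, C)" and E1: "card E1 = d + 2" "uniform_OM E1 C1 d"
    using uniform_OM_restriction_minor[OF assms(1)] by blast
  obtain E2 C2 where m2: "minor (E2, C2) (E1, C1)" and E2: "card E2 = 4 + 2" "uniform_OM E2 C2 4"
    using uniform_OM_corank_two_contraction_minor[OF E1(2,1) assms(2)] by blast
  have "om_iso (E2, C2) (alternating_OM (4 + 2) 4)"
    using E2 by (intro uniform_corank_two.om_iso_alternating) unfold_locales
  then show ?thesis using minor_trans[OF m2 m1] by auto
qed

end
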